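(* In the Cross Model on the strip $\mathbb{Z}_K$ (with $K\ge1$ an integer and $\varepsilon\in(0,1)$), the processes $(\mathbf{D}^{K,d}_i)_{i\ge0}$ and $(\mathbf{Y}_i)_{i\ge0}$ are Markov chains. Moreover, $(\mathbf{Y}_i)_{i\ge0}$ has the law of the discrete-time synchronous TASEP on $[\![-K+1,K]\!]$ in which the jump probability, the entry probability and the exit probability are all equal to $\varepsilon$.
   Context: Cross Model: $\mathbb{Z}_K=\mathbb{Z}\times[\![-K,K]\!]$ with vertical edges $(i,j)\to(i,j+1)$ ($j\in[\![-K,K-1]\!]$), horizontal edges $(i,j)\to(i+1,j)$, and diagonal edges $(i,j)\to(i+1,j\pm1)$ (within the strip). Vertical and horizontal edges have length $1$, diagonal edges length $2$. All vertical and diagonal edges are open; each horizontal edge is open with probability $1-\varepsilon$ and closed with probability $\varepsilon$, independently. For $i\ge0$, $j\in[\![-K,K]\!]$, $D^{K,d}(i,j)$ is the length of a shortest path of open edges in $\mathbb{Z}_K$ from $(0,0)$ to $(i,j)$, and $\mathbf{D}^{K,d}_i=(D^{K,d}(i,j))_{j\in[\![-K,K]\!]}$. Define $\mathbf{Y}_i=(Y_i^j)_{j\in[\![-K+1,K]\!]}\in\{\bullet,\circ\}^{2K}$ by $Y_i^j=\bullet$ if $D^{K,d}(i,j)=D^{K,d}(i,j-1)-1$ and $Y_i^j=\circ$ if $D^{K,d}(i,j)=D^{K,d}(i,j-1)+1$ (one of these always holds); site $j$ is occupied by a particle at time $i$ iff $Y_i^j=\bullet$. The synchronous TASEP on $[\![-K+1,K]\!]$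 with jump, entry and exit probability $\varepsilon$ is the Markov chain on $\{\bullet,\circ\}^{2K}$ where, from time $t$ to $t+1$, independently: each particle at $j\in[\![-K+1,K-1]\!]$ such that site $j+1$ is empty at time $t$ moves to $j+1$ with probability $\varepsilon$; if site $-K+1$ is empty at time $t$, a particle enters there with probability $\varepsilon$; if site $K$ is occupied at time $t$, its particle exits with probability $\varepsilon$. *)

theory Defs
  imports "HOL-Probability.Probability"
begin

definition in_strip :: "nat \<Rightarrow> int \<times> int \<Rightarrow> bool" where
  "in_strip K v \<longleftrightarrow> - int K \<le> snd v \<and> snd v \<le> int K"

text \<open>An edge configuration: omega (i,j) = True iff the horizontal edge (i,j)--(i+1,j) is open.\<close>

definition open_edge :: "nat \<Rightarrow> (int \<times> int \<Rightarrow> bool) \<Rightarrow> int \<times> int \<Rightarrow> int \<times> int \<Rightarrow> nat \<Rightarrow> bool" where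
  "open_edge K \<omega> u v w \<longleftrightarrow> in_strip K u \<and> in_strip K v \<and>
     ((fst u = fst v \<and> \<bar>snd u - snd v\<bar> = 1 \<and> w = 1)
    \<or> (\<bar>fst u - fst v\<bar> = 1 \<and> snd u = snd v \<and> w = 1 \<and> \<omega> (min (fst u) (fst v), snd u))
    \<or> (\<bar>fst u - fst v\<bar> = 1 \<and> \<bar>snd u - snd v\<bar> = 1 \<and> w = 2))"

inductive path_len :: "nat \<Rightarrow> (int \<times> int \<Rightarrow> bool) \<Rightarrow> int \<times> int \<Rightarrow> int \<times> int \<Rightarrow> nat \<Rightarrow> bool"
  for K \<omega> where
  refl: "path_len K \<omega> u u 0"
| step: "open_edge K \<omega> u v w \<Longrightarrow> path_len K \<omega> v x n \<Longrightarrow> path_len K \<omega> u x (w + n)"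

definition Dist :: "nat \<Rightarrow> (int \<times> int \<Rightarrow> bool) \<Rightarrow> int \<Rightarrow> int \<Rightarrow> nat" where
  "Dist K \<omega> i j = (LEAST n. path_len K \<omega> (0, 0) (i, j) n)"

definition Dvec :: "nat \<Rightarrow> (int \<times> int \<Rightarrow> bool) \<Rightarrow> nat \<Rightarrow> int \<Rightarrow> nat" where
  "Dvec K \<omega> i = (\<lambda>j. if - int K \<le> j \<and> j \<le> int K then Dist K \<omega> (int i) j else 0)"

definition Yvec :: "nat \<Rightarrow> (int \<times> int \<Rightarrow> bool) \<Rightarrow> nat \<Rightarrow> int \<Rightarrow> bool" where
  "Yvec K \<omega> i = (\<lambda>j. if - int K + 1 \<le> j \<and> j \<le> int K
        then Dist K \<omega> (int i) j + 1 = Dist K \<omega> (int i) (j - 1) else False)"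

definition edge_space :: "real \<Rightarrow> (int \<times> int \<Rightarrow> bool) measure" where
  "edge_space \<epsilon> = PiM UNIV (\<lambda>_. measure_pmf (bernoulli_pmf (1 - \<epsilon>)))"

text \<open>Independent coins c j (j in [-K,K]), each True with probability eps:
  c(-K) is the entry coin, c j (-K+1 <= j <= K-1) the jump coin of a particle at j,
  c K the exit coin of a particle at K.\<close>
definition tasep_update :: "nat \<Rightarrow> (int \<Rightarrow> bool) \<Rightarrow> (int \<Rightarrow> bool) \<Rightarrow> int \<Rightarrow> bool" where
  "tasep_update K \<eta> c = (\<lambda>j.
     if - int K + 1 \<le> j \<and> j \<le> int K then
       (\<eta> j \<and> \<not> ((j < int K \<and> \<not> \<eta> (j + 1) \<and> c j) \<or> (j = int K \<and> c j)))
       \<or> (- int K + 1 < j \<and> \<eta> (j - 1) \<and> \<not> \<eta> j \<and> c (j - 1))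
       \<or> (j = - int K + 1 \<and> \<not> \<eta> j \<and> c (- int K))
     else False)"

definition tasep_step :: "nat \<Rightarrow> real \<Rightarrow> (int \<Rightarrow> bool) \<Rightarrow> (int \<Rightarrow> bool) pmf" where
  "tasep_step K \<epsilon> \<eta> =
     map_pmf (tasep_update K \<eta>) (Pi_pmf {- int K .. int K} False (\<lambda>_. bernoulli_pmf \<epsilon>))"

end

theory Submission
  imports Defs
begin

text \<open>
  Write D_i for the distance profile on column i. It has unit slopes, and
  D_{i+1}(j) = D_i(j) + 1 unless j is a local minimum of D_i whose horizontal edge into
  column i + 1 is closed, in which case D_{i+1}(j) = D_i(j) + 3. The upper bounds are explicit
  paths (horizontal, diagonal from a lower neighbour, or diagonal and back vertically); the lower
  bound holds because this profile, continued to negative columns, grows along every open edge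
  by at most the edge length.
  A local minimum is a particle followed by a hole or the exit, or the entrance followed by a
  hole, so raising it by 2 is exactly one TASEP move whose coin is the closed edge. Hence
  D_{i+1} and Y_{i+1} are fixed functions of D_i, resp. Y_i, and of the closed edges of column i,
  which are i.i.d. Bernoulli(\<epsilon>) and independent across columns; this is the Markov property.
\<close>

section \<open>Distances on the strip\<close>

definition local_min :: "nat \<Rightarrow> (int \<Rightarrow> int) \<Rightarrow> int \<Rightarrow> bool" where
  "local_min K D j \<longleftrightarrow>
     (j = - int K \<or> D (j - 1) = D j + 1) \<and> (j = int K \<or> D (j + 1) = D j + 1)"

definition dist_step :: "nat \<Rightarrow> (int \<Rightarrow> bool) \<Rightarrow> (int \<Rightarrow> int) \<Rightarrow> int \<Rightarrow> int" where
  "dist_step K c D = (\<lambda>j. D j + 1 + (if local_min K D j \<and> c j then 2 else 0))"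

definition closed_col :: "nat \<Rightarrow> (int \<times> int \<Rightarrow> bool) \<Rightarrow> nat \<Rightarrow> int \<Rightarrow> bool" where
  "closed_col K \<omega> i = (\<lambda>j. - int K \<le> j \<and> j \<le> int K \<and> \<not> \<omega> (int i, j))"

fun dist_profile :: "nat \<Rightarrow> (int \<times> int \<Rightarrow> bool) \<Rightarrow> nat \<Rightarrow> int \<Rightarrow> int" where
  "dist_profile K \<omega> 0 = (\<lambda>j. \<bar>j\<bar>)"
| "dist_profile K \<omega> (Suc i) = dist_step K (closed_col K \<omega> i) (dist_profile K \<omega> i)"

definition unit_slope :: "nat \<Rightarrow> (int \<Rightarrow> int) \<Rightarrow> bool" where
  "unit_slope K D \<longleftrightarrow> (\<forall>j. - int K \<le> j \<and> j < int K \<longrightarrow> \<bar>D (j + 1) - D j\<bar> = 1)"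

lemma unit_slope_adjacent:
  assumes "unit_slope K D" "- int K \<le> b" "b \<le> int K" "- int K \<le> b'" "b' \<le> int K" "\<bar>b - b'\<bar> = 1"
  shows "\<bar>D b - D b'\<bar> = 1"
proof -
  have "\<bar>D (min b b' + 1) - D (min b b')\<bar> = 1"
    using assms unfolding unit_slope_def by (simp add: min_def)
  moreover have "max b b' = min b b' + 1" using assms(6) by auto
  ultimately show ?thesis by (auto simp: min_def max_def split: if_splits)
qed

lemma unit_slope_cases:
  assumes "unit_slope K D" "- int K \<le> j" "j < int K"
  shows "D (j + 1) = D j + 1 \<or> D j = D (j + 1) + 1"
  using assms unfolding unit_slope_def by fastforce

lemma unit_slope_dist_step:
  assumes "unit_slope K D" shows "unit_slope K (dist_step K c D)"
  using assms by (auto simp: unit_slope_def dist_step_def local_min_def)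

lemma unit_slope_dist_profile: "unit_slope K (dist_profile K \<omega> i)"
proof (induction i)
  case 0
  show ?case by (auto simp: unit_slope_def)
next
  case (Suc i)
  then show ?case by (simp add: unit_slope_dist_step)
qed

lemma dist_profile_nonneg: "dist_profile K \<omega> i j \<ge> 0"
  by (induction i arbitrary: j) (auto simp: dist_step_def)

lemma dist_step_lipschitz:
  assumes "unit_slope K D" "- int K \<le> b" "b \<le> int K" "- int K \<le> b'" "b' \<le> int K"
    and "\<bar>b - b'\<bar> \<le> 1" "b = b' \<Longrightarrow> \<not> c b"
  shows "\<bar>dist_step K c D b' - D b\<bar> \<le> (if b = b' then 1 else 2)"
proof (cases "b = b'")
  case True
  then show ?thesis using assms(7) by (simp add: dist_step_def)
next
  case False
  then have "\<bar>b - b'\<bar> = 1" using assms(6) by auto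
  then have adj: "\<bar>D b - D b'\<bar> = 1" by (rule unit_slope_adjacent[OF assms(1-5)])
  have "D b = D b' + 1" if "local_min K D b'"
  proof (cases "b = b' + 1")
    case True
    then show ?thesis using that assms(3) by (auto simp: local_min_def)
  next
    case False
    then have "b = b' - 1" using assms(6) \<open>b \<noteq> b'\<close> by auto
    then show ?thesis using that assms(2) by (auto simp: local_min_def)
  qed
  then show ?thesis using adj False by (auto simp: dist_step_def)
qed

text \<open>On columns \<open>i < 0\<close>, where \<open>nat i = 0\<close>, the potential is the lattice distance \<open>|i| + |j|\<close>.\<close>

definition potential :: "nat \<Rightarrow> (int \<times> int \<Rightarrow> bool) \<Rightarrow> int \<times> int \<Rightarrow> int" where
  "potential K \<omega> v = dist_profile K \<omega> (nat (fst v)) (snd v) - min (fst v) 0"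

lemma open_edge_commute: "open_edge K \<omega> u v w \<longleftrightarrow> open_edge K \<omega> v u w"
  by (auto simp: open_edge_def min.commute abs_minus_commute)

lemma potential_forward_edge:
  assumes "open_edge K \<omega> u v w" "fst u \<le> fst v"
  shows "\<bar>potential K \<omega> u - potential K \<omega> v\<bar> \<le> int w"
proof -
  obtain a b a' b' where u: "u = (a, b)" and v: "v = (a', b')" by fastforce
  have strip: "- int K \<le> b" "b \<le> int K" "- int K \<le> b'" "b' \<le> int K"
    using assms u v by (auto simp: open_edge_def in_strip_def)
  consider (vertical) "a' = a" "\<bar>b - b'\<bar> = 1" "w = 1"
    | (forward) "a' = a + 1" "\<bar>b - b'\<bar> \<le> 1" "b = b' \<Longrightarrow> \<omega> (a, b)" "w = (if b = b' then 1 else 2)"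
    using assms u v by (auto simp: open_edge_def)
  then show ?thesis
  proof cases
    case vertical
    then show ?thesis
      using unit_slope_adjacent[OF unit_slope_dist_profile strip] u v by (simp add: potential_def)
  next
    case forward
    show ?thesis
    proof (cases "a < 0")
      case True
      then show ?thesis using forward u v by (auto simp: potential_def)
    next
      case False
      define D where "D = dist_profile K \<omega> (nat a)"
      have "potential K \<omega> u = D b" using False u by (simp add: potential_def D_def)
      moreover have "potential K \<omega> v = dist_step K (closed_col K \<omega> (nat a)) D b'"
        using False forward(1) v by (simp add: potential_def D_def nat_add_distrib)
      moreover have "b = b' \<Longrightarrow> \<not> closed_col K \<omega> (nat a) b"
        using forward(3) False by (simp add: closed_col_def)
      note dist_step_lipschitz[where c = "closed_col K \<omega> (nat a)",
          OF unit_slope_dist_profile[of K \<omega> "nat a", folded D_def] strip forward(2) this]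
      ultimately show ?thesis using forward(4) by (auto simp: abs_minus_commute split: if_splits)
    qed
  qed
qed

lemma potential_edge:
  assumes "open_edge K \<omega> u v w"
  shows "\<bar>potential K \<omega> u - potential K \<omega> v\<bar> \<le> int w"
proof (cases "fst u \<le> fst v")
  case False
  then have "\<bar>potential K \<omega> v - potential K \<omega> u\<bar> \<le> int w"
    using assms by (intro potential_forward_edge) (auto simp: open_edge_commute)
  then show ?thesis by (simp add: abs_minus_commute)
qed (use assms potential_forward_edge in blast)

lemma potential_path:
  assumes "path_len K \<omega> u v n"
  shows "potential K \<omega> v \<le> potential K \<omega> u + int n"
  using assms
proof (induction rule: path_len.induct)
  case (step u v w x n)
  then show ?case using potential_edge[OF step(1)] by simp
qed simp

lemma path_len_snoc:
  assumes "path_len K \<omega> u v n" "open_edge K \<omega> v x w"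
  shows "path_len K \<omega> u x (n + w)"
  using assms
proof (induction rule: path_len.induct)
  case (refl u)
  then show ?case using path_len.step[OF _ path_len.refl] by fastforce
next
  case (step u v w' y n)
  then show ?case using path_len.step[of K \<omega> u v w' x "n + w"] by (simp add: add.assoc)
qed

lemma vertical_path:
  assumes "\<bar>j\<bar> \<le> int K"
  shows "path_len K \<omega> (a, 0) (a, j) (nat \<bar>j\<bar>)"
  using assms
proof (induction "nat \<bar>j\<bar>" arbitrary: j)
  case 0
  then show ?case by (simp add: path_len.refl)
next
  case (Suc m)
  define j' where "j' = (if j > 0 then j - 1 else j + 1)"
  have "j \<noteq> 0" using Suc.hyps(2) by auto
  then have j': "\<bar>j'\<bar> = \<bar>j\<bar> - 1" "\<bar>j - j'\<bar> = 1" by (auto simp: j'_def)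
  moreover have m: "m = nat \<bar>j'\<bar>" using j'(1) Suc.hyps(2) by linarith
  moreover have j'K: "\<bar>j'\<bar> \<le> int K" using j'(1) Suc.prems by linarith
  ultimately have "path_len K \<omega> (a, 0) (a, j') m" using Suc.hyps(1) by blast
  moreover have "open_edge K \<omega> (a, j') (a, j) 1"
    using j'(2) j'K Suc.prems by (simp add: open_edge_def in_strip_def abs_le_iff abs_minus_commute)
  ultimately show ?case using path_len_snoc Suc.hyps(2) by fastforce
qed

lemma lower_neighbour:
  assumes "unit_slope K D" "- int K \<le> j" "j \<le> int K" "\<not> local_min K D j"
  obtains k where "- int K \<le> k" "k \<le> int K" "\<bar>k - j\<bar> = 1" "D k + 1 = D j"
proof (cases "j \<noteq> - int K \<and> D (j - 1) \<noteq> D j + 1")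
  case True
  then have "D (j - 1) + 1 = D j"
    using unit_slope_cases[OF assms(1), of "j - 1"] assms(2,3) by auto
  then show thesis using True assms(2,3) by (intro that[of "j - 1"]) auto
next
  case False
  then have "j \<noteq> int K" "D (j + 1) \<noteq> D j + 1" using assms(4) by (auto simp: local_min_def)
  then have "D (j + 1) + 1 = D j"
    using unit_slope_cases[OF assms(1), of j] assms(2,3) by auto
  then show thesis using \<open>j \<noteq> int K\<close> assms(2,3) by (intro that[of "j + 1"]) auto
qed

lemma path_next_column:
  assumes K: "K \<ge> 1" and slope: "unit_slope K D" and nonneg: "\<And>k. D k \<ge> 0"
    and paths: "\<And>k. - int K \<le> k \<Longrightarrow> k \<le> int K \<Longrightarrow> path_len K \<omega> (0, 0) (int i, k) (nat (D k))"
    and j: "- int K \<le> j" "j \<le> int K"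
  shows "path_len K \<omega> (0, 0) (int i + 1, j) (nat (dist_step K (closed_col K \<omega> i) D j))"
proof -
  consider (horizontal) "\<omega> (int i, j)" | (descent) "\<not> \<omega> (int i, j)" "\<not> local_min K D j"
    | (trapped) "\<not> \<omega> (int i, j)" "local_min K D j"
    by blast
  then show ?thesis
  proof cases
    case horizontal
    then have "open_edge K \<omega> (int i, j) (int i + 1, j) 1"
      using j by (simp add: open_edge_def in_strip_def)
    note path_len_snoc[OF paths[OF j] this]
    moreover have "nat (dist_step K (closed_col K \<omega> i) D j) = nat (D j) + 1"
      using horizontal nonneg[of j] by (simp add: dist_step_def closed_col_def)
    ultimately show ?thesis by simp
  next
    case descent
    obtain k where k: "- int K \<le> k" "k \<le> int K" "\<bar>k - j\<bar> = 1" "D k + 1 = D j"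
      using lower_neighbour[OF slope j descent(2)] .
    then have "open_edge K \<omega> (int i, k) (int i + 1, j) 2"
      using j by (simp add: open_edge_def in_strip_def)
    note path_len_snoc[OF paths[OF k(1,2)] this]
    moreover have "nat (dist_step K (closed_col K \<omega> i) D j) = nat (D k) + 2"
      using descent k(4) nonneg[of k] by (simp add: dist_step_def)
    ultimately show ?thesis by simp
  next
    case trapped
    define k where "k = (if j < int K then j + 1 else j - 1)"
    have k: "- int K \<le> k" "k \<le> int K" "\<bar>k - j\<bar> = 1" using K j by (auto simp: k_def)
    then have "open_edge K \<omega> (int i, j) (int i + 1, k) 2" "open_edge K \<omega> (int i + 1, k) (int i + 1, j) 1"
      using j by (simp_all add: open_edge_def in_strip_def abs_minus_commute)
    note path_len_snoc[OF path_len_snoc[OF paths[OF j] this(1)] this(2)]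
    moreover have "nat (dist_step K (closed_col K \<omega> i) D j) = nat (D j) + 2 + 1"
      using trapped j nonneg[of j] by (simp add: dist_step_def closed_col_def)
    ultimately show ?thesis by simp
  qed
qed

lemma path_dist_profile:
  assumes "K \<ge> 1" "- int K \<le> j" "j \<le> int K"
  shows "path_len K \<omega> (0, 0) (int i, j) (nat (dist_profile K \<omega> i j))"
  using assms(2,3)
proof (induction i arbitrary: j)
  case 0
  then show ?case using vertical_path[of j K \<omega> 0] by simp
next
  case (Suc i)
  have "path_len K \<omega> (0, 0) (int i + 1, j)
      (nat (dist_step K (closed_col K \<omega> i) (dist_profile K \<omega> i) j))"
    by (rule path_next_column[OF assms(1) unit_slope_dist_profile dist_profile_nonneg Suc.IH Suc.prems])
  then show ?case by (simp add: add.commute)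
qed

lemma Dist_eq_dist_profile:
  assumes "K \<ge> 1" "- int K \<le> j" "j \<le> int K"
  shows "Dist K \<omega> (int i) j = nat (dist_profile K \<omega> i j)"
  unfolding Dist_def
proof (rule Least_equality)
  show "path_len K \<omega> (0, 0) (int i, j) (nat (dist_profile K \<omega> i j))"
    using path_dist_profile[OF assms] .
next
  fix n
  assume "path_len K \<omega> (0, 0) (int i, j) n"
  from potential_path[OF this] show "nat (dist_profile K \<omega> i j) \<le> n"
    by (simp add: potential_def)
qed

section \<open>The particle system\<close>

definition particles :: "nat \<Rightarrow> (int \<Rightarrow> int) \<Rightarrow> int \<Rightarrow> bool" where
  "particles K D = (\<lambda>j. - int K + 1 \<le> j \<and> j \<le> int K \<and> D j + 1 = D (j - 1))"

lemma local_min_iff_particles: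
  assumes "unit_slope K D" "- int K \<le> j" "j \<le> int K"
  shows "local_min K D j \<longleftrightarrow>
    (j = - int K \<or> particles K D j) \<and> (j = int K \<or> \<not> particles K D (j + 1))"
proof (cases "j = int K")
  case False
  then have "D (j + 1) = D j + 1 \<or> D j = D (j + 1) + 1"
    using assms by (intro unit_slope_cases) auto
  then show ?thesis using assms(2,3) False by (auto simp: local_min_def particles_def)
qed (use assms(2,3) in \<open>auto simp: local_min_def particles_def\<close>)

lemma particles_dist_step_iff:
  assumes "unit_slope K D" "- int K + 1 \<le> j" "j \<le> int K"
  shows "particles K (dist_step K c D) j \<longleftrightarrow>
    (if particles K D j then \<not> (local_min K D j \<and> c j) else local_min K D (j - 1) \<and> c (j - 1))"
proof -
  have "D j = D (j - 1) + 1 \<or> D (j - 1) = D j + 1"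
    using unit_slope_cases[OF assms(1), of "j - 1"] assms(2,3) by auto
  then show ?thesis using assms(2,3) by (auto simp: particles_def dist_step_def local_min_def)
qed

lemma particles_dist_step:
  assumes "K \<ge> 1" "unit_slope K D"
  shows "particles K (dist_step K c D) = tasep_update K (particles K D) c"
proof
  fix j
  let ?\<eta> = "particles K D"
  show "particles K (dist_step K c D) j = tasep_update K ?\<eta> c j"
  proof (cases "- int K + 1 \<le> j \<and> j \<le> int K")
    case True
    have "local_min K D j \<longleftrightarrow> ?\<eta> j \<and> (j = int K \<or> \<not> ?\<eta> (j + 1))"
      using local_min_iff_particles[OF assms(2), of j] True by auto
    moreover have "local_min K D (j - 1) \<longleftrightarrow> (j = - int K + 1 \<or> ?\<eta> (j - 1)) \<and> \<not> ?\<eta> j"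
      using local_min_iff_particles[OF assms(2), of "j - 1"] True assms(1) by auto
    moreover have "?\<eta> (j - 1) \<Longrightarrow> - int K + 1 < j" by (simp add: particles_def)
    moreover have "j = - int K + 1 \<Longrightarrow> c (j - 1) = c (- int K)" by simp
    ultimately show ?thesis
      using particles_dist_step_iff[OF assms(2), of j c] True assms(1)
      by (auto simp: tasep_update_def)
  qed (auto simp: particles_def tasep_update_def)
qed

definition strip_vec :: "nat \<Rightarrow> (int \<Rightarrow> int) \<Rightarrow> int \<Rightarrow> nat" where
  "strip_vec K D = (\<lambda>j. if - int K \<le> j \<and> j \<le> int K then nat (D j) else 0)"

definition dist_vec_step :: "nat \<Rightarrow> (int \<Rightarrow> nat) \<Rightarrow> (int \<Rightarrow> bool) \<Rightarrow> int \<Rightarrow> nat" where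
  "dist_vec_step K d c = strip_vec K (dist_step K c (\<lambda>j. int (d j)))"

lemma Dvec_eq_strip_vec:
  assumes "K \<ge> 1"
  shows "Dvec K \<omega> i = strip_vec K (dist_profile K \<omega> i)"
  using Dist_eq_dist_profile[OF assms] by (auto simp: Dvec_def strip_vec_def)

lemma dist_step_cong:
  assumes "\<And>k. - int K \<le> k \<Longrightarrow> k \<le> int K \<Longrightarrow> D k = D' k" "- int K \<le> j" "j \<le> int K"
  shows "dist_step K c D j = dist_step K c D' j"
  using assms by (auto simp: dist_step_def local_min_def)

lemma Dvec_Suc:
  assumes "K \<ge> 1"
  shows "Dvec K \<omega> (Suc i) = dist_vec_step K (Dvec K \<omega> i) (closed_col K \<omega> i)"
proof -
  have "dist_step K (closed_col K \<omega> i) (\<lambda>j. int (strip_vec K (dist_profile K \<omega> i) j)) j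
      = dist_step K (closed_col K \<omega> i) (dist_profile K \<omega> i) j"
    if "- int K \<le> j" "j \<le> int K" for j
    using that dist_profile_nonneg by (intro dist_step_cong) (auto simp: strip_vec_def)
  then show ?thesis by (auto simp: Dvec_eq_strip_vec[OF assms] dist_vec_step_def strip_vec_def)
qed

lemma Yvec_eq_particles:
  assumes "K \<ge> 1"
  shows "Yvec K \<omega> i = particles K (dist_profile K \<omega> i)"
proof
  fix j
  have "0 \<le> dist_profile K \<omega> i j" "0 \<le> dist_profile K \<omega> i (j - 1)"
    by (rule dist_profile_nonneg)+
  then show "Yvec K \<omega> i j = particles K (dist_profile K \<omega> i) j"
    by (auto simp: Yvec_def particles_def Dist_eq_dist_profile[OF assms])
qed

lemma Yvec_Suc:
  assumes "K \<ge> 1"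
  shows "Yvec K \<omega> (Suc i) = tasep_update K (Yvec K \<omega> i) (closed_col K \<omega> i)"
  using particles_dist_step[OF assms unit_slope_dist_profile] by (simp add: Yvec_eq_particles[OF assms])

section \<open>Processes driven by independent coins\<close>

fun trajectory :: "'s \<Rightarrow> ('s \<Rightarrow> 'c \<Rightarrow> 's) \<Rightarrow> (nat \<Rightarrow> 'c) \<Rightarrow> nat \<Rightarrow> 's" where
  "trajectory s0 f cs 0 = s0"
| "trajectory s0 f cs (Suc k) = f (trajectory s0 f cs k) (cs k)"

lemma trajectory_cong:
  "(\<And>i. i < k \<Longrightarrow> cs i = cs' i) \<Longrightarrow> trajectory s0 f cs k = trajectory s0 f cs' k"
  by (induction k) auto

lemma measure_pair_pmf_Times:
  "measure_pmf.prob (pair_pmf p q) (A \<times> B) = measure_pmf.prob p A * measure_pmf.prob q B"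
proof -
  have "measure_pmf.prob (pair_pmf p q) (A \<times> B)
      = measure_pmf.prob (pair_pmf p q) ((A \<inter> set_pmf p) \<times> (B \<inter> set_pmf q))"
    by (subst measure_Int_set_pmf[symmetric]) (simp add: Times_Int_Times)
  also have "\<dots> = measure_pmf.prob p (A \<inter> set_pmf p) * measure_pmf.prob q (B \<inter> set_pmf q)"
    by (rule measure_pmf_prob_product) auto
  finally show ?thesis by (simp add: measure_Int_set_pmf)
qed

lemma trajectory_fun_upd_preimage:
  fixes f :: "'s \<Rightarrow> 'c \<Rightarrow> 's"
  shows "(\<lambda>(y, g). g(n := y)) -` {cs. \<forall>k\<le>Suc n. trajectory s0 f cs k = d k}
     = {y. f (d n) y = d (Suc n)} \<times> {g. \<forall>k\<le>n. trajectory s0 f g k = d k}"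
proof (intro set_eqI)
  fix x :: "'c \<times> (nat \<Rightarrow> 'c)"
  obtain y g where x: "x = (y, g)" by fastforce
  have same: "trajectory s0 f (g(n := y)) k = trajectory s0 f g k" if "k \<le> n" for k
    using that by (intro trajectory_cong) auto
  have "x \<in> (\<lambda>(y, g). g(n := y)) -` {cs. \<forall>k\<le>Suc n. trajectory s0 f cs k = d k}
      \<longleftrightarrow> (\<forall>k\<le>n. trajectory s0 f (g(n := y)) k = d k)
          \<and> trajectory s0 f (g(n := y)) (Suc n) = d (Suc n)"
    by (auto simp: x le_Suc_eq)
  also have "\<dots> \<longleftrightarrow> (\<forall>k\<le>n. trajectory s0 f g k = d k) \<and> f (d n) y = d (Suc n)"
    using same by auto
  finally show "x \<in> (\<lambda>(y, g). g(n := y)) -` {cs. \<forall>k\<le>Suc n. trajectory s0 f cs k = d k}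
      \<longleftrightarrow> x \<in> {y. f (d n) y = d (Suc n)} \<times> {g. \<forall>k\<le>n. trajectory s0 f g k = d k}"
    by (auto simp: x)
qed

lemma prob_trajectory:
  "measure_pmf.prob (Pi_pmf {..<n} dflt (\<lambda>_. Q)) {cs. \<forall>k\<le>n. trajectory s0 f cs k = d k}
     = (if d 0 = s0 then 1 else 0) * (\<Prod>k<n. pmf (map_pmf (f (d k)) Q) (d (Suc k)))"
proof (induction n)
  case 0
  show ?case by (auto simp: measure_return)
next
  case (Suc n)
  have "Pi_pmf {..<Suc n} dflt (\<lambda>_. Q)
      = map_pmf (\<lambda>(y, g). g(n := y)) (pair_pmf Q (Pi_pmf {..<n} dflt (\<lambda>_. Q)))"
    unfolding lessThan_Suc by (rule Pi_pmf_insert) auto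
  then have "measure_pmf.prob (Pi_pmf {..<Suc n} dflt (\<lambda>_. Q))
        {cs. \<forall>k\<le>Suc n. trajectory s0 f cs k = d k}
      = measure_pmf.prob Q {y. f (d n) y = d (Suc n)}
        * measure_pmf.prob (Pi_pmf {..<n} dflt (\<lambda>_. Q)) {g. \<forall>k\<le>n. trajectory s0 f g k = d k}"
    by (simp only: measure_map_pmf trajectory_fun_upd_preimage measure_pair_pmf_Times)
  then show ?case using Suc.IH by (simp add: pmf_map vimage_def mult_ac)
qed

definition coins :: "nat \<Rightarrow> real \<Rightarrow> (int \<Rightarrow> bool) pmf" where
  "coins K \<epsilon> = Pi_pmf {- int K .. int K} False (\<lambda>_. bernoulli_pmf \<epsilon>)"

text \<open>Columns from \<open>n\<close> on are blanked, so that the result ranges over the finite \<open>col_configs K n\<close>.\<close>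

definition closed_cols :: "nat \<Rightarrow> nat \<Rightarrow> (int \<times> int \<Rightarrow> bool) \<Rightarrow> nat \<Rightarrow> int \<Rightarrow> bool" where
  "closed_cols K n \<omega> = (\<lambda>k. if k < n then closed_col K \<omega> k else (\<lambda>_. False))"

definition col_configs :: "nat \<Rightarrow> nat \<Rightarrow> (nat \<Rightarrow> int \<Rightarrow> bool) set" where
  "col_configs K n = PiE_dflt {..<n} (\<lambda>_. False) (\<lambda>_. PiE_dflt {- int K .. int K} False (\<lambda>_. UNIV))"

definition col_window :: "nat \<Rightarrow> nat \<Rightarrow> (int \<times> int) set" where
  "col_window K n = (\<lambda>(k, j). (int k, j)) ` ({..<n} \<times> {- int K .. int K})"

lemma finite_col_configs: "finite (col_configs K n)"
  unfolding col_configs_def by (intro finite_PiE_dflt) auto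

lemma closed_cols_in_col_configs: "closed_cols K n \<omega> \<in> col_configs K n"
  by (auto simp: closed_cols_def col_configs_def PiE_dflt_def closed_col_def)

lemma set_pmf_Pi_coins: "set_pmf (Pi_pmf {..<n} (\<lambda>_. False) (\<lambda>_. coins K \<epsilon>)) \<subseteq> col_configs K n"
proof -
  have "set_pmf (coins K \<epsilon>) \<subseteq> PiE_dflt {- int K .. int K} False (\<lambda>_. UNIV)"
    unfolding coins_def by (subst set_Pi_pmf) (auto simp: PiE_dflt_def)
  then show ?thesis by (subst set_Pi_pmf) (auto simp: PiE_dflt_def col_configs_def)
qed

lemma space_edge_space: "space (edge_space \<epsilon>) = UNIV"
  by (simp add: edge_space_def space_PiM PiE_UNIV_domain)

lemma closed_cols_eq_iff:
  assumes "cs \<in> col_configs K n"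
  shows "closed_cols K n \<omega> = cs \<longleftrightarrow> (\<forall>v \<in> col_window K n. \<omega> v = (\<not> cs (nat (fst v)) (snd v)))"
proof -
  have "closed_cols K n \<omega> = cs \<longleftrightarrow>
      (\<forall>k < n. \<forall>j. - int K \<le> j \<and> j \<le> int K \<longrightarrow> cs k j = (\<not> \<omega> (int k, j)))"
    using assms unfolding closed_cols_def closed_col_def col_configs_def PiE_dflt_def fun_eq_iff
    by auto
  then show ?thesis by (auto simp: col_window_def)
qed

lemma closed_cols_eq_prod_emb:
  assumes "cs \<in> col_configs K n"
  shows "{\<omega> \<in> space (edge_space \<epsilon>). closed_cols K n \<omega> = cs}
    = prod_emb UNIV (\<lambda>_. measure_pmf (bernoulli_pmf (1 - \<epsilon>))) (col_window K n)
        (PiE (col_window K n) (\<lambda>v. {\<not> cs (nat (fst v)) (snd v)}))"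
  using closed_cols_eq_iff[OF assms]
  by (subst prod_emb_PiE) (auto simp: space_edge_space PiE_UNIV_domain Pi_iff split: if_splits)

lemma prob_closed_cols_eq:
  assumes "0 \<le> \<epsilon>" "\<epsilon> \<le> 1" "cs \<in> col_configs K n"
  shows "measure (edge_space \<epsilon>) {\<omega> \<in> space (edge_space \<epsilon>). closed_cols K n \<omega> = cs}
    = pmf (Pi_pmf {..<n} (\<lambda>_. False) (\<lambda>_. coins K \<epsilon>)) cs"
proof -
  let ?M = "\<lambda>_ :: int \<times> int. measure_pmf (bernoulli_pmf (1 - \<epsilon>))"
  interpret product_prob_space ?M UNIV
    by (intro product_prob_spaceI prob_space_measure_pmf)
  have flip: "pmf (bernoulli_pmf (1 - \<epsilon>)) (\<not> b) = pmf (bernoulli_pmf \<epsilon>) b" for b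
    using assms(1,2) by (cases b) auto
  have "measure (edge_space \<epsilon>) {\<omega> \<in> space (edge_space \<epsilon>). closed_cols K n \<omega> = cs}
      = measure (PiM UNIV ?M) (prod_emb UNIV ?M (col_window K n)
          (PiE (col_window K n) (\<lambda>v. {\<not> cs (nat (fst v)) (snd v)})))"
    by (subst closed_cols_eq_prod_emb[OF assms(3)]) (simp add: edge_space_def)
  also have "\<dots> = (\<Prod>v\<in>col_window K n. pmf (bernoulli_pmf \<epsilon>) (cs (nat (fst v)) (snd v)))"
    by (subst measure_PiM_emb) (auto simp: col_window_def measure_pmf_single flip)
  also have "\<dots> = (\<Prod>k<n. \<Prod>j\<in>{- int K .. int K}. pmf (bernoulli_pmf \<epsilon>) (cs k j))"
    unfolding col_window_def
    by (subst prod.reindex) (auto simp: inj_on_def prod.cartesian_product split_beta)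
  also have "\<dots> = (\<Prod>k<n. pmf (coins K \<epsilon>) (cs k))"
    using assms(3) unfolding coins_def
    by (intro prod.cong refl pmf_Pi'[symmetric]) (auto simp: col_configs_def PiE_dflt_def)
  also have "\<dots> = pmf (Pi_pmf {..<n} (\<lambda>_. False) (\<lambda>_. coins K \<epsilon>)) cs"
    using assms(3) by (intro pmf_Pi'[symmetric]) (auto simp: col_configs_def PiE_dflt_def)
  finally show ?thesis .
qed

lemma prob_closed_cols_in:
  assumes "0 \<le> \<epsilon>" "\<epsilon> \<le> 1"
  shows "measure (edge_space \<epsilon>) {\<omega> \<in> space (edge_space \<epsilon>). closed_cols K n \<omega> \<in> R}
       = measure_pmf.prob (Pi_pmf {..<n} (\<lambda>_. False) (\<lambda>_. coins K \<epsilon>)) R"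
proof -
  let ?\<mu> = "Pi_pmf {..<n} (\<lambda>_. False) (\<lambda>_. coins K \<epsilon>)"
  let ?F = "\<lambda>cs. {\<omega> \<in> space (edge_space \<epsilon>). closed_cols K n \<omega> = cs}"
  interpret product_prob_space "\<lambda>_. measure_pmf (bernoulli_pmf (1 - \<epsilon>))" UNIV
    by (intro product_prob_spaceI prob_space_measure_pmf)
  interpret E: prob_space "edge_space \<epsilon>"
    unfolding edge_space_def by (rule P.prob_space_axioms)
  have "?F cs \<in> sets (edge_space \<epsilon>)" if "cs \<in> col_configs K n" for cs
    by (subst closed_cols_eq_prod_emb[OF that], unfold edge_space_def)
      (rule sets_PiM_I, auto simp: col_window_def)
  then have "measure (edge_space \<epsilon>) (\<Union>cs \<in> R \<inter> col_configs K n. ?F cs)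
      = (\<Sum>cs \<in> R \<inter> col_configs K n. measure (edge_space \<epsilon>) (?F cs))"
    by (intro E.finite_measure_finite_Union) (auto simp: finite_col_configs disjoint_family_on_def)
  also have "(\<Union>cs \<in> R \<inter> col_configs K n. ?F cs)
      = {\<omega> \<in> space (edge_space \<epsilon>). closed_cols K n \<omega> \<in> R}"
    using closed_cols_in_col_configs by auto
  also have "(\<Sum>cs \<in> R \<inter> col_configs K n. measure (edge_space \<epsilon>) (?F cs))
      = (\<Sum>cs \<in> R \<inter> col_configs K n. pmf ?\<mu> cs)"
    using assms by (intro sum.cong refl prob_closed_cols_eq) auto
  also have "\<dots> = measure_pmf.prob ?\<mu> (R \<inter> col_configs K n)"
    by (simp add: measure_measure_pmf_finite finite_col_configs)
  also have "\<dots> = measure_pmf.prob ?\<mu> (R \<inter> col_configs K n \<inter> set_pmf ?\<mu>)"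
    by (rule measure_Int_set_pmf[symmetric])
  also have "R \<inter> col_configs K n \<inter> set_pmf ?\<mu> = R \<inter> set_pmf ?\<mu>"
    using set_pmf_Pi_coins[of n K \<epsilon>] by blast
  also have "measure_pmf.prob ?\<mu> (R \<inter> set_pmf ?\<mu>) = measure_pmf.prob ?\<mu> R"
    by (rule measure_Int_set_pmf)
  finally show ?thesis .
qed

lemma markov_property_closed_cols:
  assumes "0 \<le> \<epsilon>" "\<epsilon> \<le> 1"
    and X: "\<And>n \<omega> k. k \<le> n \<Longrightarrow> X \<omega> k = trajectory s0 f (closed_cols K n \<omega>) k"
  shows "measure (edge_space \<epsilon>) {\<omega> \<in> space (edge_space \<epsilon>). \<forall>k\<le>n. X \<omega> k = d k}
    = measure (edge_space \<epsilon>) {\<omega> \<in> space (edge_space \<epsilon>). X \<omega> 0 = d 0}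
      * (\<Prod>k<n. pmf (map_pmf (f (d k)) (coins K \<epsilon>)) (d (Suc k)))"
proof -
  have prob_path: "measure (edge_space \<epsilon>) {\<omega> \<in> space (edge_space \<epsilon>). \<forall>k\<le>m. X \<omega> k = d k}
      = (if d 0 = s0 then 1 else 0) * (\<Prod>k<m. pmf (map_pmf (f (d k)) (coins K \<epsilon>)) (d (Suc k)))"
    for m
  proof -
    have "{\<omega> \<in> space (edge_space \<epsilon>). \<forall>k\<le>m. X \<omega> k = d k}
        = {\<omega> \<in> space (edge_space \<epsilon>). closed_cols K m \<omega> \<in> {cs. \<forall>k\<le>m. trajectory s0 f cs k = d k}}"
      using X by auto
    then show ?thesis by (simp only: prob_closed_cols_in[OF assms(1,2)] prob_trajectory)
  qed
  have "{\<omega> \<in> space (edge_space \<epsilon>). X \<omega> 0 = d 0}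
      = {\<omega> \<in> space (edge_space \<epsilon>). \<forall>k\<le>0. X \<omega> k = d k}"
    by auto
  then show ?thesis using prob_path[of n] prob_path[of 0] by simp
qed

lemma Dvec_trajectory:
  assumes "K \<ge> 1" "k \<le> n"
  shows "Dvec K \<omega> k = trajectory (strip_vec K abs) (dist_vec_step K) (closed_cols K n \<omega>) k"
  using assms(2)
proof (induction k)
  case 0
  show ?case by (simp add: Dvec_eq_strip_vec[OF assms(1)])
next
  case (Suc k)
  then show ?case by (simp add: Dvec_Suc[OF assms(1)] closed_cols_def)
qed

lemma Yvec_trajectory:
  assumes "K \<ge> 1" "k \<le> n"
  shows "Yvec K \<omega> k = trajectory (particles K abs) (tasep_update K) (closed_cols K n \<omega>) k"
  using assms(2)
proof (induction k)
  case 0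
  show ?case by (simp add: Yvec_eq_particles[OF assms(1)])
next
  case (Suc k)
  then show ?case by (simp add: Yvec_Suc[OF assms(1)] closed_cols_def)
qed

theorem proposition3:
  fixes K :: nat and \<epsilon> :: real
  assumes "K \<ge> 1" and "0 < \<epsilon>" and "\<epsilon> < 1"
  shows "(\<exists>p :: (int \<Rightarrow> nat) \<Rightarrow> (int \<Rightarrow> nat) pmf.
            \<forall>(n::nat) (d :: nat \<Rightarrow> int \<Rightarrow> nat).
              measure (edge_space \<epsilon>) {\<omega> \<in> space (edge_space \<epsilon>). \<forall>k\<le>n. Dvec K \<omega> k = d k}
              = measure (edge_space \<epsilon>) {\<omega> \<in> space (edge_space \<epsilon>). Dvec K \<omega> 0 = d 0}
                * (\<Prod>k<n. pmf (p (d k)) (d (Suc k))))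
       \<and> (\<forall>(n::nat) (y :: nat \<Rightarrow> int \<Rightarrow> bool).
              measure (edge_space \<epsilon>) {\<omega> \<in> space (edge_space \<epsilon>). \<forall>k\<le>n. Yvec K \<omega> k = y k}
              = measure (edge_space \<epsilon>) {\<omega> \<in> space (edge_space \<epsilon>). Yvec K \<omega> 0 = y 0}
                * (\<Prod>k<n. pmf (tasep_step K \<epsilon> (y k)) (y (Suc k))))"
proof (intro conjI exI allI)
  have \<epsilon>: "0 \<le> \<epsilon>" "\<epsilon> \<le> 1" using assms(2,3) by auto
  fix n
  show "measure (edge_space \<epsilon>) {\<omega> \<in> space (edge_space \<epsilon>). \<forall>k\<le>n. Dvec K \<omega> k = d k}
      = measure (edge_space \<epsilon>) {\<omega> \<in> space (edge_space \<epsilon>). Dvec K \<omega> 0 = d 0}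
        * (\<Prod>k<n. pmf ((\<lambda>d. map_pmf (dist_vec_step K d) (coins K \<epsilon>)) (d k)) (d (Suc k)))" for d
    using markov_property_closed_cols[OF \<epsilon> Dvec_trajectory[OF assms(1)]] by simp
  show "measure (edge_space \<epsilon>) {\<omega> \<in> space (edge_space \<epsilon>). \<forall>k\<le>n. Yvec K \<omega> k = y k}
      = measure (edge_space \<epsilon>) {\<omega> \<in> space (edge_space \<epsilon>). Yvec K \<omega> 0 = y 0}
        * (\<Prod>k<n. pmf (tasep_step K \<epsilon> (y k)) (y (Suc k)))" for y
    using markov_property_closed_cols[OF \<epsilon> Yvec_trajectory[OF assms(1)]]
    by (simp add: tasep_step_def coins_def)
qed

end
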